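(* Fix $\beta>0$ and $h\in\mathbb{R}$, and suppose there is a number $q$ and a constant $C_0$ depending only on $\beta,h$ such that for every $N$, $$\mathbb{E}\langle (R_{12}-q)^4\rangle \le \frac{C_0}{N^2}.$$ Let $v_1,\dots,v_N,w_1,\dots,w_N$ be arbitrary (real-valued) functions of $g$ and $\sigma$. Then, with a constant $C(\beta,h)$ depending only on $\beta,h$ (and the constants in the hypothesis), $$\mathbb{E}\Bigl(\frac{1}{N^2}\sum_{j,k=1}^N\langle\dot\sigma_jv_k\rangle\langle w_k\sigma_j\rangle\Bigr) \le \frac{C(\beta,h)}{N^{3/2}}\sum_{k=1}^N\bigl(\mathbb{E}\langle v_k^2\rangle\langle w_k^2\rangle\bigr)^{1/2}.$$
   Context: Sherrington–Kirkpatrick model: for a positive integer $N$, let $\Sigma_N=\{-1,1\}^N$ and let $g=(g_{ij})_{1\le i<j\le N}$ be i.i.d. standard Gaussian random variables (the disorder). Given $g$, the Gibbs measure on $\Sigma_N$ is $G_N(\sigma)=Z_N^{-1}\exp\bigl(\frac{\beta}{\sqrt N}\sum_{1\le i<j\le N} g_{ij}\sigma_i\sigma_j + h\sum_{i=1}^N\sigma_i\bigr)$, with $Z_N$ the normalizing constant. Replicas $\sigma^1,\sigma^2,\dots$ are independent samples from $G_N$ given $g$, and for a function $f$ of $g$ and replicas, $\langle f\rangle$ denotes the quenched average (expectation over replicas with $g$ fixed); in $\langle\dot\sigma_jv_k\rangle$ the functions are evaluated at the same configuration $\sigma$. $\mathbb{E}$ is expectation over the disorder. The overlap is $R_{12}=\frac1N\sum_{i=1}^N\sigma^1_i\sigma^2_i$.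 For each $j$, $\dot\sigma_j := \sigma_j - \langle\sigma_j\rangle$. *)

theory Defs
  imports "HOL-Probability.Probability"
begin

text \<open>Sites are indexed by 0..<N. A configuration is a function nat => real with
  values +1/-1 on 0..<N and 0 elsewhere. The disorder g is indexed by pairs (i,j), i<j<N.\<close>

definition spins :: "nat \<Rightarrow> (nat \<Rightarrow> real) set" where
  "spins N = {\<sigma>. (\<forall>i<N. \<sigma> i = 1 \<or> \<sigma> i = -1) \<and> (\<forall>i. N \<le> i \<longrightarrow> \<sigma> i = 0)}"

definition pairs :: "nat \<Rightarrow> (nat \<times> nat) set" where
  "pairs N = {(i, j). i < j \<and> j < N}"

definition disorder :: "nat \<Rightarrow> (nat \<times> nat \<Rightarrow> real) measure" where
  "disorder N = PiM (pairs N) (\<lambda>_. std_normal_distribution)"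

definition hamil :: "real \<Rightarrow> real \<Rightarrow> nat \<Rightarrow> (nat \<times> nat \<Rightarrow> real) \<Rightarrow> (nat \<Rightarrow> real) \<Rightarrow> real" where
  "hamil \<beta> h N g \<sigma> =
     \<beta> / sqrt (real N) * (\<Sum>(i, j)\<in>pairs N. g (i, j) * \<sigma> i * \<sigma> j) + h * (\<Sum>i<N. \<sigma> i)"

definition partition_fn :: "real \<Rightarrow> real \<Rightarrow> nat \<Rightarrow> (nat \<times> nat \<Rightarrow> real) \<Rightarrow> real" where
  "partition_fn \<beta> h N g = (\<Sum>\<sigma>\<in>spins N. exp (hamil \<beta> h N g \<sigma>))"

definition gibbs :: "real \<Rightarrow> real \<Rightarrow> nat \<Rightarrow> (nat \<times> nat \<Rightarrow> real) \<Rightarrow> (nat \<Rightarrow> real) \<Rightarrow> real" where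
  "gibbs \<beta> h N g \<sigma> = exp (hamil \<beta> h N g \<sigma>) / partition_fn \<beta> h N g"

definition gavg :: "real \<Rightarrow> real \<Rightarrow> nat \<Rightarrow> (nat \<times> nat \<Rightarrow> real) \<Rightarrow> ((nat \<Rightarrow> real) \<Rightarrow> real) \<Rightarrow> real" where
  "gavg \<beta> h N g f = (\<Sum>\<sigma>\<in>spins N. f \<sigma> * gibbs \<beta> h N g \<sigma>)"

definition gavg2 :: "real \<Rightarrow> real \<Rightarrow> nat \<Rightarrow> (nat \<times> nat \<Rightarrow> real)
    \<Rightarrow> ((nat \<Rightarrow> real) \<Rightarrow> (nat \<Rightarrow> real) \<Rightarrow> real) \<Rightarrow> real" where
  "gavg2 \<beta> h N g f =
     (\<Sum>\<sigma>1\<in>spins N. \<Sum>\<sigma>2\<in>spins N. f \<sigma>1 \<sigma>2 * gibbs \<beta> h N g \<sigma>1 * gibbs \<beta> h N g \<sigma>2)"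

definition overlap :: "nat \<Rightarrow> (nat \<Rightarrow> real) \<Rightarrow> (nat \<Rightarrow> real) \<Rightarrow> real" where
  "overlap N \<sigma>1 \<sigma>2 = (\<Sum>i<N. \<sigma>1 i * \<sigma>2 i) / real N"

definition sdot :: "real \<Rightarrow> real \<Rightarrow> nat \<Rightarrow> (nat \<times> nat \<Rightarrow> real) \<Rightarrow> nat \<Rightarrow> (nat \<Rightarrow> real) \<Rightarrow> real" where
  "sdot \<beta> h N g j \<sigma> = \<sigma> j - gavg \<beta> h N g (\<lambda>\<tau>. \<tau> j)"

end

theory Submission
  imports Defs
begin

(* Fix the disorder, write <.> for the Gibbs average and let sigma, tau be two independent
   replicas. Since sum_j (sigma_j - <sigma_j>) tau_j = N (R(sigma,tau) - <R(.,tau)>), the inner sum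
   sum_j <sdot_j v><w sigma_j> equals N <<v(sigma) w(tau) (R(sigma,tau) - <R(.,tau)>)>>.
   Cauchy-Schwarz for the two-replica average, the minimality of the variance among second moments
   and Cauchy-Schwarz once more bound it by N <v^2>^(1/2) <w^2>^(1/2) <<(R - q)^4>>^(1/4).
   In expectation, Cauchy-Schwarz over the disorder and Jensen turn the last factor into
   (E <<(R - q)^4>>)^(1/4) <= C0^(1/4) N^(-1/2). *)

lemma weighted_Cauchy_Schwarz:
  fixes p a b :: "'a \<Rightarrow> real"
  assumes "finite S" and "\<And>x. x \<in> S \<Longrightarrow> 0 \<le> p x"
  shows "(\<Sum>x\<in>S. a x * b x * p x)\<^sup>2 \<le> (\<Sum>x\<in>S. (a x)\<^sup>2 * p x) * (\<Sum>x\<in>S. (b x)\<^sup>2 * p x)"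
proof -
  have "(\<Sum>x\<in>S. (a x * sqrt (p x)) * (b x * sqrt (p x)))\<^sup>2
      \<le> (\<Sum>x\<in>S. (a x * sqrt (p x))\<^sup>2) * (\<Sum>x\<in>S. (b x * sqrt (p x))\<^sup>2)"
    by (rule Cauchy_Schwarz_ineq_sum)
  moreover have "(a x * sqrt (p x)) * (b x * sqrt (p x)) = a x * b x * p x" if "x \<in> S" for x
    using assms(2)[OF that] by (simp add: algebra_simps)
  moreover have "(c x * sqrt (p x))\<^sup>2 = (c x)\<^sup>2 * p x" if "x \<in> S" for c x
    using assms(2)[OF that] by (simp add: power_mult_distrib)
  ultimately show ?thesis by (simp cong: sum.cong)
qed

lemma weighted_variance_le:
  fixes p x :: "'a \<Rightarrow> real"
  assumes "finite S" and "(\<Sum>s\<in>S. p s) = 1"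
  shows "(\<Sum>s\<in>S. (x s - (\<Sum>t\<in>S. x t * p t))\<^sup>2 * p s) \<le> (\<Sum>s\<in>S. (x s - c)\<^sup>2 * p s)"
proof -
  define m where "m = (\<Sum>t\<in>S. x t * p t)"
  have "(\<Sum>s\<in>S. (x s - c)\<^sup>2 * p s)
      = (\<Sum>s\<in>S. (x s - m)\<^sup>2 * p s + 2 * (m - c) * (x s * p s)
                  - 2 * (m - c) * m * p s + (m - c)\<^sup>2 * p s)"
    by (rule sum.cong) (auto simp: power2_eq_square algebra_simps)
  also have "\<dots> = (\<Sum>s\<in>S. (x s - m)\<^sup>2 * p s) + (m - c)\<^sup>2"
    by (simp add: sum.distrib sum_subtractf assms(2) m_def flip: sum_distrib_left)
  finally show ?thesis by (simp add: m_def)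
qed

lemma weighted_square_le_sqrt_fourth:
  fixes p x :: "'a \<Rightarrow> real"
  assumes "finite S" and "\<And>s. s \<in> S \<Longrightarrow> 0 \<le> p s" and "(\<Sum>s\<in>S. p s) = 1"
  shows "(\<Sum>s\<in>S. (x s)\<^sup>2 * p s) \<le> sqrt (\<Sum>s\<in>S. x s ^ 4 * p s)"
proof (rule real_le_rsqrt)
  show "(\<Sum>s\<in>S. (x s)\<^sup>2 * p s)\<^sup>2 \<le> (\<Sum>s\<in>S. x s ^ 4 * p s)"
    using weighted_Cauchy_Schwarz[of S p "\<lambda>s. (x s)\<^sup>2" "\<lambda>_. 1"] assms
    by (simp flip: power_mult)
qed

lemma centered_cross_sum_eq:
  fixes S :: "(nat \<Rightarrow> real) set" and p V W :: "(nat \<Rightarrow> real) \<Rightarrow> real"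
  shows "(\<Sum>j<N. (\<Sum>\<sigma>\<in>S. (\<sigma> j - (\<Sum>\<rho>\<in>S. \<rho> j * p \<rho>)) * V \<sigma> * p \<sigma>) * (\<Sum>\<tau>\<in>S. W \<tau> * \<tau> j * p \<tau>))
       = real N * (\<Sum>\<sigma>\<in>S. \<Sum>\<tau>\<in>S.
           V \<sigma> * W \<tau> * (overlap N \<sigma> \<tau> - (\<Sum>\<rho>\<in>S. overlap N \<rho> \<tau> * p \<rho>)) * p \<sigma> * p \<tau>)"
proof -
  have centered: "(\<Sum>j<N. (\<sigma> j - (\<Sum>\<rho>\<in>S. \<rho> j * p \<rho>)) * \<tau> j)
      = real N * (overlap N \<sigma> \<tau> - (\<Sum>\<rho>\<in>S. overlap N \<rho> \<tau> * p \<rho>))" for \<sigma> \<tau>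
  proof (cases "N = 0")
    case False
    have "(\<Sum>j<N. (\<Sum>\<rho>\<in>S. \<rho> j * p \<rho>) * \<tau> j) = (\<Sum>\<rho>\<in>S. (\<Sum>j<N. \<rho> j * \<tau> j) * p \<rho>)"
      by (simp add: sum_distrib_left sum_distrib_right mult_ac) (rule sum.swap)
    with False show ?thesis
      by (simp add: overlap_def algebra_simps sum_subtractf sum_distrib_left sum_divide_distrib)
  qed simp
  have "(\<Sum>j<N. (\<Sum>\<sigma>\<in>S. (\<sigma> j - (\<Sum>\<rho>\<in>S. \<rho> j * p \<rho>)) * V \<sigma> * p \<sigma>) * (\<Sum>\<tau>\<in>S. W \<tau> * \<tau> j * p \<tau>))
      = (\<Sum>\<sigma>\<in>S. \<Sum>\<tau>\<in>S. V \<sigma> * W \<tau> * (\<Sum>j<N. (\<sigma> j - (\<Sum>\<rho>\<in>S. \<rho> j * p \<rho>)) * \<tau> j) * p \<sigma> * p \<tau>)"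
    by (simp add: sum_product sum_distrib_left sum_distrib_right mult_ac sum.swap[of _ "{..<N}"])
  also have "\<dots> = real N * (\<Sum>\<sigma>\<in>S. \<Sum>\<tau>\<in>S.
      V \<sigma> * W \<tau> * (overlap N \<sigma> \<tau> - (\<Sum>\<rho>\<in>S. overlap N \<rho> \<tau> * p \<rho>)) * p \<sigma> * p \<tau>)"
    by (simp only: centered) (simp add: sum_distrib_left mult_ac)
  finally show ?thesis .
qed

lemma double_sum_eq_sum_pairs:
  fixes f :: "'a \<Rightarrow> 'a \<Rightarrow> real" and p :: "'a \<Rightarrow> real"
  shows "(\<Sum>\<sigma>\<in>S. \<Sum>\<tau>\<in>S. f \<sigma> \<tau> * p \<sigma> * p \<tau>)
    = (\<Sum>z\<in>S \<times> S. f (fst z) (snd z) * (p (fst z) * p (snd z)))"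
  unfolding sum.cartesian_product by (simp add: case_prod_beta mult.assoc)

lemma double_weighted_Cauchy_Schwarz:
  fixes p :: "'a \<Rightarrow> real" and a b :: "'a \<Rightarrow> 'a \<Rightarrow> real"
  assumes "finite S" and "\<And>\<sigma>. \<sigma> \<in> S \<Longrightarrow> 0 \<le> p \<sigma>"
  shows "(\<Sum>\<sigma>\<in>S. \<Sum>\<tau>\<in>S. a \<sigma> \<tau> * b \<sigma> \<tau> * p \<sigma> * p \<tau>)\<^sup>2
    \<le> (\<Sum>\<sigma>\<in>S. \<Sum>\<tau>\<in>S. (a \<sigma> \<tau>)\<^sup>2 * p \<sigma> * p \<tau>) * (\<Sum>\<sigma>\<in>S. \<Sum>\<tau>\<in>S. (b \<sigma> \<tau>)\<^sup>2 * p \<sigma> * p \<tau>)"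
  unfolding double_sum_eq_sum_pairs
  using weighted_Cauchy_Schwarz[where S="S \<times> S" and p="\<lambda>z. p (fst z) * p (snd z)"
      and a="\<lambda>z. a (fst z) (snd z)" and b="\<lambda>z. b (fst z) (snd z)"] assms
  by (simp add: mem_Times_iff)

lemma double_weighted_square_le_sqrt_fourth:
  fixes p :: "'a \<Rightarrow> real" and x :: "'a \<Rightarrow> 'a \<Rightarrow> real"
  assumes "finite S" and "\<And>\<sigma>. \<sigma> \<in> S \<Longrightarrow> 0 \<le> p \<sigma>" and "(\<Sum>\<sigma>\<in>S. p \<sigma>) = 1"
  shows "(\<Sum>\<sigma>\<in>S. \<Sum>\<tau>\<in>S. (x \<sigma> \<tau>)\<^sup>2 * p \<sigma> * p \<tau>) \<le> sqrt (\<Sum>\<sigma>\<in>S. \<Sum>\<tau>\<in>S. x \<sigma> \<tau> ^ 4 * p \<sigma> * p \<tau>)"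
proof -
  have "(\<Sum>z\<in>S \<times> S. p (fst z) * p (snd z)) = 1"
    using double_sum_eq_sum_pairs[of "\<lambda>_ _. 1" p S] assms(3) by (simp flip: sum_product)
  then show ?thesis
    unfolding double_sum_eq_sum_pairs
    using weighted_square_le_sqrt_fourth[where S="S \<times> S" and p="\<lambda>z. p (fst z) * p (snd z)"
        and x="\<lambda>z. x (fst z) (snd z)"] assms(1,2)
    by (simp add: mem_Times_iff)
qed

lemma double_weighted_variance_le:
  fixes p :: "'a \<Rightarrow> real" and x :: "'a \<Rightarrow> 'a \<Rightarrow> real"
  assumes "finite S" and "\<And>\<sigma>. \<sigma> \<in> S \<Longrightarrow> 0 \<le> p \<sigma>" and "(\<Sum>\<sigma>\<in>S. p \<sigma>) = 1"
  shows "(\<Sum>\<sigma>\<in>S. \<Sum>\<tau>\<in>S. (x \<sigma> \<tau> - (\<Sum>\<rho>\<in>S. x \<rho> \<tau> * p \<rho>))\<^sup>2 * p \<sigma> * p \<tau>)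
    \<le> (\<Sum>\<sigma>\<in>S. \<Sum>\<tau>\<in>S. (x \<sigma> \<tau> - c)\<^sup>2 * p \<sigma> * p \<tau>)"
proof -
  have "(\<Sum>\<sigma>\<in>S. (x \<sigma> \<tau> - (\<Sum>\<rho>\<in>S. x \<rho> \<tau> * p \<rho>))\<^sup>2 * p \<sigma>) * p \<tau>
      \<le> (\<Sum>\<sigma>\<in>S. (x \<sigma> \<tau> - c)\<^sup>2 * p \<sigma>) * p \<tau>" if "\<tau> \<in> S" for \<tau>
    using assms that by (intro mult_right_mono weighted_variance_le) auto
  then have "(\<Sum>\<tau>\<in>S. (\<Sum>\<sigma>\<in>S. (x \<sigma> \<tau> - (\<Sum>\<rho>\<in>S. x \<rho> \<tau> * p \<rho>))\<^sup>2 * p \<sigma>) * p \<tau>)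
      \<le> (\<Sum>\<tau>\<in>S. (\<Sum>\<sigma>\<in>S. (x \<sigma> \<tau> - c)\<^sup>2 * p \<sigma>) * p \<tau>)"
    by (rule sum_mono)
  then show ?thesis
    by (subst (1 2) sum.swap) (simp add: sum_distrib_right)
qed

lemma abs_centered_cross_sum_le:
  fixes S :: "(nat \<Rightarrow> real) set" and p V W :: "(nat \<Rightarrow> real) \<Rightarrow> real"
  assumes S: "finite S" and p_nonneg: "\<And>\<sigma>. \<sigma> \<in> S \<Longrightarrow> 0 \<le> p \<sigma>"
    and p_sum: "(\<Sum>\<sigma>\<in>S. p \<sigma>) = 1"
  shows "\<bar>\<Sum>j<N. (\<Sum>\<sigma>\<in>S. (\<sigma> j - (\<Sum>\<rho>\<in>S. \<rho> j * p \<rho>)) * V \<sigma> * p \<sigma>) * (\<Sum>\<tau>\<in>S. W \<tau> * \<tau> j * p \<tau>)\<bar>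
     \<le> real N * sqrt ((\<Sum>\<sigma>\<in>S. (V \<sigma>)\<^sup>2 * p \<sigma>) * (\<Sum>\<tau>\<in>S. (W \<tau>)\<^sup>2 * p \<tau>))
        * sqrt (sqrt (\<Sum>\<sigma>\<in>S. \<Sum>\<tau>\<in>S. (overlap N \<sigma> \<tau> - q) ^ 4 * p \<sigma> * p \<tau>))"
proof -
  define X where "X \<sigma> \<tau> = overlap N \<sigma> \<tau> - (\<Sum>\<rho>\<in>S. overlap N \<rho> \<tau> * p \<rho>)" for \<sigma> \<tau>
  define T where "T = (\<Sum>\<sigma>\<in>S. \<Sum>\<tau>\<in>S. (V \<sigma> * W \<tau>) * X \<sigma> \<tau> * p \<sigma> * p \<tau>)"
  define A where "A = (\<Sum>\<sigma>\<in>S. (V \<sigma>)\<^sup>2 * p \<sigma>) * (\<Sum>\<tau>\<in>S. (W \<tau>)\<^sup>2 * p \<tau>)"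
  define Y where "Y = (\<Sum>\<sigma>\<in>S. \<Sum>\<tau>\<in>S. (overlap N \<sigma> \<tau> - q) ^ 4 * p \<sigma> * p \<tau>)"
  have A_eq: "(\<Sum>\<sigma>\<in>S. \<Sum>\<tau>\<in>S. (V \<sigma> * W \<tau>)\<^sup>2 * p \<sigma> * p \<tau>) = A"
    by (simp add: A_def sum_product power_mult_distrib mult_ac)
  have "T\<^sup>2 \<le> A * (\<Sum>\<sigma>\<in>S. \<Sum>\<tau>\<in>S. (X \<sigma> \<tau>)\<^sup>2 * p \<sigma> * p \<tau>)"
    unfolding T_def A_eq[symmetric] by (rule double_weighted_Cauchy_Schwarz[OF S p_nonneg])
  also have "\<dots> \<le> A * sqrt Y"
  proof (rule mult_left_mono)
    show "(\<Sum>\<sigma>\<in>S. \<Sum>\<tau>\<in>S. (X \<sigma> \<tau>)\<^sup>2 * p \<sigma> * p \<tau>) \<le> sqrt Y"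
      unfolding X_def Y_def
      using double_weighted_variance_le[OF S p_nonneg p_sum, where x="overlap N" and c=q]
        double_weighted_square_le_sqrt_fourth[OF S p_nonneg p_sum,
          where x="\<lambda>\<sigma> \<tau>. overlap N \<sigma> \<tau> - q"]
      by (rule order_trans)
    show "0 \<le> A"
      using p_nonneg by (simp add: A_def sum_nonneg)
  qed
  finally have "\<bar>T\<bar> \<le> sqrt A * sqrt (sqrt Y)"
    by (metis real_sqrt_abs real_sqrt_le_mono real_sqrt_mult)
  moreover have "(\<Sum>j<N. (\<Sum>\<sigma>\<in>S. (\<sigma> j - (\<Sum>\<rho>\<in>S. \<rho> j * p \<rho>)) * V \<sigma> * p \<sigma>) * (\<Sum>\<tau>\<in>S. W \<tau> * \<tau> j * p \<tau>))
      = real N * T"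
    unfolding centered_cross_sum_eq T_def X_def by (simp add: mult.assoc)
  ultimately show ?thesis
    by (simp add: A_def Y_def abs_mult mult.assoc mult_left_mono)
qed

lemma integrable_mult_square_integrable:
  fixes f g :: "'a \<Rightarrow> real"
  assumes [measurable]: "f \<in> borel_measurable M" "g \<in> borel_measurable M"
    and "integrable M (\<lambda>x. (f x)\<^sup>2)" and "integrable M (\<lambda>x. (g x)\<^sup>2)"
  shows "integrable M (\<lambda>x. f x * g x)"
proof (rule Bochner_Integration.integrable_bound)
  show "integrable M (\<lambda>x. (f x)\<^sup>2 + (g x)\<^sup>2)"
    using assms(3,4) by (rule Bochner_Integration.integrable_add)
  have "\<bar>f x\<bar> * \<bar>g x\<bar> \<le> (f x)\<^sup>2 + (g x)\<^sup>2" for x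
  proof -
    have "0 \<le> \<bar>f x\<bar> * \<bar>g x\<bar>" by simp
    moreover have "2 * \<bar>f x\<bar> * \<bar>g x\<bar> \<le> (f x)\<^sup>2 + (g x)\<^sup>2"
      using sum_squares_bound[of "\<bar>f x\<bar>" "\<bar>g x\<bar>"] by simp
    ultimately show ?thesis by linarith
  qed
  then show "AE x in M. norm (f x * g x) \<le> norm ((f x)\<^sup>2 + (g x)\<^sup>2)"
    by (simp add: abs_mult)
qed simp

lemma Cauchy_Schwarz_integral:
  fixes f g :: "'a \<Rightarrow> real"
  assumes [measurable]: "f \<in> borel_measurable M" "g \<in> borel_measurable M"
    and f_sq: "integrable M (\<lambda>x. (f x)\<^sup>2)" and g_sq: "integrable M (\<lambda>x. (g x)\<^sup>2)"
  shows "(\<integral>x. f x * g x \<partial>M) \<le> sqrt (\<integral>x. (f x)\<^sup>2 \<partial>M) * sqrt (\<integral>x. (g x)\<^sup>2 \<partial>M)"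
proof -
  have fg: "integrable M (\<lambda>x. \<bar>f x * g x\<bar>)"
    using integrable_mult_square_integrable[OF assms] by simp
  have nn: "(\<integral>\<^sup>+x. ennreal (h x) \<partial>M) = ennreal (\<integral>x. h x \<partial>M)"
    if "integrable M h" "\<And>x. 0 \<le> h x" for h :: "'a \<Rightarrow> real"
    using that by (intro nn_integral_eq_integral) auto
  have "(\<integral>\<^sup>+x. ennreal \<bar>f x * g x\<bar> \<partial>M)\<^sup>2
      \<le> (\<integral>\<^sup>+x. ennreal ((f x)\<^sup>2) \<partial>M) * (\<integral>\<^sup>+x. ennreal ((g x)\<^sup>2) \<partial>M)"
    using Cauchy_Schwarz_nn_integral[of "\<lambda>x. ennreal \<bar>f x\<bar>" M "\<lambda>x. ennreal \<bar>g x\<bar>"]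
    by (simp add: abs_mult ennreal_power flip: ennreal_mult)
  then have "ennreal ((\<integral>x. \<bar>f x * g x\<bar> \<partial>M)\<^sup>2)
      \<le> ennreal ((\<integral>x. (f x)\<^sup>2 \<partial>M) * (\<integral>x. (g x)\<^sup>2 \<partial>M))"
    unfolding nn[OF fg abs_ge_zero] nn[OF f_sq zero_le_power2] nn[OF g_sq zero_le_power2]
    by (simp add: ennreal_power integral_nonneg_AE flip: ennreal_mult)
  then have "(\<integral>x. \<bar>f x * g x\<bar> \<partial>M)\<^sup>2 \<le> (\<integral>x. (f x)\<^sup>2 \<partial>M) * (\<integral>x. (g x)\<^sup>2 \<partial>M)"
    by (simp add: integral_nonneg_AE)
  then have "(\<integral>x. \<bar>f x * g x\<bar> \<partial>M) \<le> sqrt (\<integral>x. (f x)\<^sup>2 \<partial>M) * sqrt (\<integral>x. (g x)\<^sup>2 \<partial>M)"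
    by (simp add: real_le_rsqrt flip: real_sqrt_mult)
  moreover have "(\<integral>x. f x * g x \<partial>M) \<le> (\<integral>x. \<bar>f x * g x\<bar> \<partial>M)"
    using fg by (intro integral_mono') auto
  ultimately show ?thesis by linarith
qed

lemma (in prob_space) integral_sqrt_le_sqrt_integral:
  fixes Y :: "'a \<Rightarrow> real"
  assumes Y: "integrable M Y" and Y_nonneg: "\<And>x. 0 \<le> Y x"
  shows "integrable M (\<lambda>x. sqrt (Y x))" and "(\<integral>x. sqrt (Y x) \<partial>M) \<le> sqrt (\<integral>x. Y x \<partial>M)"
proof -
  have [measurable]: "(\<lambda>x. sqrt (Y x)) \<in> borel_measurable M"
    using Y by measurable
  have sq: "integrable M (\<lambda>x. (sqrt (Y x))\<^sup>2)"
    using Y Y_nonneg by simp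
  show "integrable M (\<lambda>x. sqrt (Y x))"
    using integrable_mult_square_integrable[of _ M "\<lambda>_. 1", OF _ _ sq] by simp
  show "(\<integral>x. sqrt (Y x) \<partial>M) \<le> sqrt (\<integral>x. Y x \<partial>M)"
    using Cauchy_Schwarz_integral[of _ M "\<lambda>_. 1", OF _ _ sq] Y_nonneg by (simp add: prob_space)
qed

lemma (in prob_space) integral_sqrt_mult_root4_le:
  fixes P Y :: "'a \<Rightarrow> real"
  assumes P: "integrable M P" and P_nonneg: "\<And>x. 0 \<le> P x"
    and Y: "integrable M Y" and Y_nonneg: "\<And>x. 0 \<le> Y x"
  shows "integrable M (\<lambda>x. sqrt (P x) * sqrt (sqrt (Y x)))"
    and "(\<integral>x. sqrt (P x) * sqrt (sqrt (Y x)) \<partial>M) \<le> sqrt (\<integral>x. P x \<partial>M) * sqrt (sqrt (\<integral>x. Y x \<partial>M))"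
proof -
  have [measurable]: "(\<lambda>x. sqrt (P x)) \<in> borel_measurable M"
      "(\<lambda>x. sqrt (sqrt (Y x))) \<in> borel_measurable M"
    using P Y by measurable
  have P_sq: "integrable M (\<lambda>x. (sqrt (P x))\<^sup>2)"
    using P P_nonneg by simp
  have Y_sq: "integrable M (\<lambda>x. (sqrt (sqrt (Y x)))\<^sup>2)"
    using integral_sqrt_le_sqrt_integral(1)[OF Y Y_nonneg] Y_nonneg by simp
  show "integrable M (\<lambda>x. sqrt (P x) * sqrt (sqrt (Y x)))"
    by (rule integrable_mult_square_integrable[OF _ _ P_sq Y_sq]) measurable
  have "(\<integral>x. sqrt (P x) * sqrt (sqrt (Y x)) \<partial>M) \<le> sqrt (\<integral>x. P x \<partial>M) * sqrt (\<integral>x. sqrt (Y x) \<partial>M)"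
    using Cauchy_Schwarz_integral[OF _ _ P_sq Y_sq] P_nonneg Y_nonneg by simp
  also have "\<dots> \<le> sqrt (\<integral>x. P x \<partial>M) * sqrt (sqrt (\<integral>x. Y x \<partial>M))"
    using integral_sqrt_le_sqrt_integral(2)[OF Y Y_nonneg] P_nonneg
    by (intro mult_left_mono real_sqrt_le_mono integral_nonneg_AE real_sqrt_ge_zero) auto
  finally show "(\<integral>x. sqrt (P x) * sqrt (sqrt (Y x)) \<partial>M)
      \<le> sqrt (\<integral>x. P x \<partial>M) * sqrt (sqrt (\<integral>x. Y x \<partial>M))" .
qed

lemma (in prob_space) integral_le_sum_sqrt_mult_root4:
  fixes F Y :: "'a \<Rightarrow> real" and P :: "'k \<Rightarrow> 'a \<Rightarrow> real"
  assumes "finite K" and P: "\<And>k. k \<in> K \<Longrightarrow> integrable M (P k)" and P_nonneg: "\<And>k x. 0 \<le> P k x"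
    and Y: "integrable M Y" and Y_nonneg: "\<And>x. 0 \<le> Y x" and "0 \<le> c"
    and F_le: "\<And>x. x \<in> space M \<Longrightarrow> F x \<le> c * (\<Sum>k\<in>K. sqrt (P k x) * sqrt (sqrt (Y x)))"
  shows "(\<integral>x. F x \<partial>M) \<le> c * (\<Sum>k\<in>K. sqrt (\<integral>x. P k x \<partial>M)) * sqrt (sqrt (\<integral>x. Y x \<partial>M))"
proof -
  note root4 = integral_sqrt_mult_root4_le[OF P P_nonneg Y Y_nonneg]
  have "(\<integral>x. F x \<partial>M) \<le> (\<integral>x. c * (\<Sum>k\<in>K. sqrt (P k x) * sqrt (sqrt (Y x))) \<partial>M)"
    using root4(1) F_le \<open>0 \<le> c\<close> P_nonneg Y_nonneg
    by (intro integral_mono') (auto intro!: sum_nonneg mult_nonneg_nonneg)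
  also have "\<dots> = c * (\<Sum>k\<in>K. \<integral>x. sqrt (P k x) * sqrt (sqrt (Y x)) \<partial>M)"
    using root4(1) by simp
  also have "\<dots> \<le> c * (\<Sum>k\<in>K. sqrt (\<integral>x. P k x \<partial>M) * sqrt (sqrt (\<integral>x. Y x \<partial>M)))"
    using root4(2) \<open>0 \<le> c\<close> by (intro mult_left_mono sum_mono) auto
  finally show ?thesis
    by (simp add: sum_distrib_right mult.assoc)
qed

lemma powr_three_halves:
  fixes x :: real
  assumes "0 \<le> x"
  shows "x powr (3/2) = x * sqrt x"
proof -
  have "x powr (3/2) = x powr 1 * x powr (1/2)"
    using powr_add[of x 1 "1/2"] by simp
  with assms show ?thesis
    by (cases "x = 0") (simp_all add: powr_half_sqrt)
qed

lemma finite_spins: "finite (spins N)"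
proof -
  have "spins N = {\<sigma>. \<forall>i. (i \<in> {..<N} \<longrightarrow> \<sigma> i \<in> {1, -1}) \<and> (i \<notin> {..<N} \<longrightarrow> \<sigma> i = 0)}"
    by (auto simp: spins_def not_less)
  then show ?thesis
    by (simp only: finite_set_of_finite_funs finite_lessThan finite.emptyI finite_insert)
qed

lemma abs_spin_le_1: "\<sigma> \<in> spins N \<Longrightarrow> \<bar>\<sigma> i\<bar> \<le> 1"
  unfolding spins_def by (cases "i < N") auto

lemma abs_overlap_le_1:
  assumes "\<sigma>1 \<in> spins N" and "\<sigma>2 \<in> spins N"
  shows "\<bar>overlap N \<sigma>1 \<sigma>2\<bar> \<le> 1"
proof -
  have "\<bar>\<Sum>i<N. \<sigma>1 i * \<sigma>2 i\<bar> \<le> (\<Sum>i<N. \<bar>\<sigma>1 i\<bar> * \<bar>\<sigma>2 i\<bar>)"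
    using sum_abs[of "\<lambda>i. \<sigma>1 i * \<sigma>2 i" "{..<N}"] by (simp add: abs_mult)
  also have "\<dots> \<le> real N"
    using sum_mono[of "{..<N}" "\<lambda>i. \<bar>\<sigma>1 i\<bar> * \<bar>\<sigma>2 i\<bar>" "\<lambda>_. 1"] assms
    by (simp add: abs_spin_le_1 mult_le_one)
  finally show ?thesis
    by (cases "N = 0") (auto simp: overlap_def divide_le_eq_1)
qed

lemma partition_fn_pos: "0 < partition_fn \<beta> h N g"
proof -
  have "(\<lambda>i. if i < N then 1 else 0) \<in> spins N"
    by (auto simp: spins_def)
  then show ?thesis
    unfolding partition_fn_def using finite_spins by (intro sum_pos) auto
qed

lemma gibbs_pos: "0 < gibbs \<beta> h N g \<sigma>"
  by (simp add: gibbs_def partition_fn_pos)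

lemma sum_gibbs: "(\<Sum>\<sigma>\<in>spins N. gibbs \<beta> h N g \<sigma>) = 1"
  using partition_fn_pos[of \<beta> h N g]
  by (simp add: gibbs_def partition_fn_def flip: sum_divide_distrib)

lemma gavg_square_nonneg: "0 \<le> gavg \<beta> h N g (\<lambda>\<sigma>. (f \<sigma>)\<^sup>2)"
  unfolding gavg_def using gibbs_pos by (intro sum_nonneg) (simp add: less_imp_le)

lemma gavg2_fourth_power_nonneg: "0 \<le> gavg2 \<beta> h N g (\<lambda>\<sigma>1 \<sigma>2. (f \<sigma>1 \<sigma>2) ^ 4)"
  unfolding gavg2_def using gibbs_pos
  by (intro sum_nonneg mult_nonneg_nonneg) (auto simp: less_imp_le zero_le_even_power)

lemma abs_gavg2_le:
  assumes "\<And>\<sigma>1 \<sigma>2. \<sigma>1 \<in> spins N \<Longrightarrow> \<sigma>2 \<in> spins N \<Longrightarrow> \<bar>f \<sigma>1 \<sigma>2\<bar> \<le> B"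
  shows "\<bar>gavg2 \<beta> h N g f\<bar> \<le> B"
proof -
  have "\<bar>gavg2 \<beta> h N g f\<bar>
      \<le> (\<Sum>\<sigma>1\<in>spins N. \<Sum>\<sigma>2\<in>spins N. \<bar>f \<sigma>1 \<sigma>2\<bar> * gibbs \<beta> h N g \<sigma>1 * gibbs \<beta> h N g \<sigma>2)"
    unfolding gavg2_def
    by (rule order_trans[OF sum_abs], rule sum_mono, rule order_trans[OF sum_abs])
      (simp add: abs_mult abs_of_pos[OF gibbs_pos])
  also have "\<dots> \<le> (\<Sum>\<sigma>1\<in>spins N. \<Sum>\<sigma>2\<in>spins N. B * gibbs \<beta> h N g \<sigma>1 * gibbs \<beta> h N g \<sigma>2)"
    using assms gibbs_pos by (intro sum_mono mult_right_mono) (auto simp: less_imp_le)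
  also have "\<dots> = B"
    by (simp add: sum_gibbs mult.assoc flip: sum_distrib_left)
  finally show ?thesis .
qed

lemma prob_space_disorder: "prob_space (disorder N)"
  unfolding disorder_def by (rule prob_space_PiM) (simp add: prob_space_normal_density)

lemma borel_measurable_disorder_component[measurable]:
  "z \<in> pairs N \<Longrightarrow> (\<lambda>g. g z) \<in> borel_measurable (disorder N)"
  unfolding disorder_def by measurable

lemma borel_measurable_gibbs[measurable]: "(\<lambda>g. gibbs \<beta> h N g \<sigma>) \<in> borel_measurable (disorder N)"
  unfolding gibbs_def partition_fn_def hamil_def case_prod_beta by measurable

lemma integrable_gavg2:
  assumes "\<And>\<sigma>1 \<sigma>2. \<sigma>1 \<in> spins N \<Longrightarrow> \<sigma>2 \<in> spins N \<Longrightarrow> \<bar>f \<sigma>1 \<sigma>2\<bar> \<le> B"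
  shows "integrable (disorder N) (\<lambda>g. gavg2 \<beta> h N g f)"
proof -
  interpret prob_space "disorder N"
    by (rule prob_space_disorder)
  show ?thesis
  proof (rule integrable_const_bound[where B=B])
    show "AE g in disorder N. norm (gavg2 \<beta> h N g f) \<le> B"
      using abs_gavg2_le[OF assms] by simp
    show "(\<lambda>g. gavg2 \<beta> h N g f) \<in> borel_measurable (disorder N)"
      unfolding gavg2_def by measurable
  qed
qed

lemma integrable_overlap_fourth_moment:
  "integrable (disorder N) (\<lambda>g. gavg2 \<beta> h N g (\<lambda>\<sigma>1 \<sigma>2. (overlap N \<sigma>1 \<sigma>2 - q) ^ 4))"
proof (rule integrable_gavg2)
  fix \<sigma>1 \<sigma>2 assume "\<sigma>1 \<in> spins N" "\<sigma>2 \<in> spins N"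
  then have "\<bar>overlap N \<sigma>1 \<sigma>2 - q\<bar> \<le> 1 + \<bar>q\<bar>"
    using abs_overlap_le_1 by fastforce
  then show "\<bar>(overlap N \<sigma>1 \<sigma>2 - q) ^ 4\<bar> \<le> (1 + \<bar>q\<bar>) ^ 4"
    unfolding power_abs by (rule power_mono) simp
qed

lemma gibbs_cross_sum_le:
  fixes V W :: "nat \<Rightarrow> (nat \<Rightarrow> real) \<Rightarrow> real"
  shows "1 / (real N)\<^sup>2 * (\<Sum>j<N. \<Sum>k<N. gavg \<beta> h N g (\<lambda>\<sigma>. sdot \<beta> h N g j \<sigma> * V k \<sigma>)
                                       * gavg \<beta> h N g (\<lambda>\<sigma>. W k \<sigma> * \<sigma> j))
    \<le> 1 / real N * (\<Sum>k<N. sqrt (gavg \<beta> h N g (\<lambda>\<sigma>. (V k \<sigma>)\<^sup>2) * gavg \<beta> h N g (\<lambda>\<sigma>. (W k \<sigma>)\<^sup>2))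
                          * sqrt (sqrt (gavg2 \<beta> h N g (\<lambda>\<sigma>1 \<sigma>2. (overlap N \<sigma>1 \<sigma>2 - q) ^ 4))))"
proof -
  have per_term: "\<bar>\<Sum>j<N. gavg \<beta> h N g (\<lambda>\<sigma>. sdot \<beta> h N g j \<sigma> * V k \<sigma>)
                           * gavg \<beta> h N g (\<lambda>\<sigma>. W k \<sigma> * \<sigma> j)\<bar>
      \<le> real N * (sqrt (gavg \<beta> h N g (\<lambda>\<sigma>. (V k \<sigma>)\<^sup>2) * gavg \<beta> h N g (\<lambda>\<sigma>. (W k \<sigma>)\<^sup>2))
                   * sqrt (sqrt (gavg2 \<beta> h N g (\<lambda>\<sigma>1 \<sigma>2. (overlap N \<sigma>1 \<sigma>2 - q) ^ 4))))" for k
    unfolding gavg_def gavg2_def sdot_def mult.assoc[of "real N", symmetric]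
    by (rule abs_centered_cross_sum_le[OF finite_spins])
      (simp_all add: gibbs_pos less_imp_le sum_gibbs)
  have "(\<Sum>k<N. \<Sum>j<N. gavg \<beta> h N g (\<lambda>\<sigma>. sdot \<beta> h N g j \<sigma> * V k \<sigma>)
                         * gavg \<beta> h N g (\<lambda>\<sigma>. W k \<sigma> * \<sigma> j))
      \<le> real N * (\<Sum>k<N. sqrt (gavg \<beta> h N g (\<lambda>\<sigma>. (V k \<sigma>)\<^sup>2) * gavg \<beta> h N g (\<lambda>\<sigma>. (W k \<sigma>)\<^sup>2))
                          * sqrt (sqrt (gavg2 \<beta> h N g (\<lambda>\<sigma>1 \<sigma>2. (overlap N \<sigma>1 \<sigma>2 - q) ^ 4))))"
    unfolding sum_distrib_left by (rule sum_mono, rule abs_le_D1, rule per_term)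
  then have "1 / (real N)\<^sup>2 * (\<Sum>k<N. \<Sum>j<N. gavg \<beta> h N g (\<lambda>\<sigma>. sdot \<beta> h N g j \<sigma> * V k \<sigma>)
                                         * gavg \<beta> h N g (\<lambda>\<sigma>. W k \<sigma> * \<sigma> j))
      \<le> 1 / (real N)\<^sup>2 * real N *
         (\<Sum>k<N. sqrt (gavg \<beta> h N g (\<lambda>\<sigma>. (V k \<sigma>)\<^sup>2) * gavg \<beta> h N g (\<lambda>\<sigma>. (W k \<sigma>)\<^sup>2))
                          * sqrt (sqrt (gavg2 \<beta> h N g (\<lambda>\<sigma>1 \<sigma>2. (overlap N \<sigma>1 \<sigma>2 - q) ^ 4))))"
    unfolding mult.assoc by (rule mult_left_mono) simp
  then show ?thesis
    by (subst sum.swap) (cases "N = 0"; simp add: power2_eq_square)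
qed

lemma integral_gibbs_cross_sum_le:
  fixes v w :: "nat \<Rightarrow> (nat \<times> nat \<Rightarrow> real) \<Rightarrow> (nat \<Rightarrow> real) \<Rightarrow> real"
  assumes fourth_moment:
      "(\<integral>g. gavg2 \<beta> h N g (\<lambda>\<sigma>1 \<sigma>2. (overlap N \<sigma>1 \<sigma>2 - q) ^ 4) \<partial>disorder N) \<le> C0 / (real N)\<^sup>2"
    and integrable: "\<And>k. k < N \<Longrightarrow> integrable (disorder N)
      (\<lambda>g. gavg \<beta> h N g (\<lambda>\<sigma>. (v k g \<sigma>)\<^sup>2) * gavg \<beta> h N g (\<lambda>\<sigma>. (w k g \<sigma>)\<^sup>2))"
  shows "(\<integral>g. 1 / (real N)\<^sup>2 *
            (\<Sum>j<N. \<Sum>k<N. gavg \<beta> h N g (\<lambda>\<sigma>. sdot \<beta> h N g j \<sigma> * v k g \<sigma>)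
                            * gavg \<beta> h N g (\<lambda>\<sigma>. w k g \<sigma> * \<sigma> j))
          \<partial>disorder N)
    \<le> sqrt (sqrt C0) / real N powr (3/2) *
       (\<Sum>k<N. sqrt (\<integral>g. gavg \<beta> h N g (\<lambda>\<sigma>. (v k g \<sigma>)\<^sup>2)
                             * gavg \<beta> h N g (\<lambda>\<sigma>. (w k g \<sigma>)\<^sup>2) \<partial>disorder N))"
proof -
  interpret prob_space "disorder N"
    by (rule prob_space_disorder)
  define P where
    "P k g = gavg \<beta> h N g (\<lambda>\<sigma>. (v k g \<sigma>)\<^sup>2) * gavg \<beta> h N g (\<lambda>\<sigma>. (w k g \<sigma>)\<^sup>2)" for k g
  define Y where "Y g = gavg2 \<beta> h N g (\<lambda>\<sigma>1 \<sigma>2. (overlap N \<sigma>1 \<sigma>2 - q) ^ 4)" for g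
  have P_nonneg: "0 \<le> P k g" for k g
    by (simp add: P_def gavg_square_nonneg)
  define S where "S = (\<Sum>k<N. sqrt (\<integral>g. P k g \<partial>disorder N))"
  have "(\<integral>g. 1 / (real N)\<^sup>2 *
            (\<Sum>j<N. \<Sum>k<N. gavg \<beta> h N g (\<lambda>\<sigma>. sdot \<beta> h N g j \<sigma> * v k g \<sigma>)
                            * gavg \<beta> h N g (\<lambda>\<sigma>. w k g \<sigma> * \<sigma> j))
          \<partial>disorder N)
      \<le> 1 / real N * S * sqrt (sqrt (\<integral>g. Y g \<partial>disorder N))" (is "integral\<^sup>L _ ?F \<le> _")
    unfolding S_def
  proof (rule integral_le_sum_sqrt_mult_root4)
    show "integrable (disorder N) (P k)" if "k \<in> {..<N}" for k
      using integrable that by (simp add: P_def[abs_def])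
    show "?F g \<le> 1 / real N * (\<Sum>k<N. sqrt (P k g) * sqrt (sqrt (Y g)))" for g
      unfolding P_def Y_def by (rule gibbs_cross_sum_le)
    show "integrable (disorder N) Y"
      unfolding Y_def[abs_def] by (rule integrable_overlap_fourth_moment)
  qed (auto simp: P_nonneg Y_def gavg2_fourth_power_nonneg)
  also have "\<dots> \<le> 1 / real N * S * (sqrt (sqrt C0) / sqrt (real N))"
  proof (rule mult_left_mono)
    have "sqrt (sqrt (\<integral>g. Y g \<partial>disorder N)) \<le> sqrt (sqrt (C0 / (real N)\<^sup>2))"
      using fourth_moment by (simp add: Y_def)
    then show "sqrt (sqrt (\<integral>g. Y g \<partial>disorder N)) \<le> sqrt (sqrt C0) / sqrt (real N)"
      by (simp add: real_sqrt_divide)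
    show "0 \<le> 1 / real N * S"
      using P_nonneg
      by (auto simp: S_def intro!: divide_nonneg_nonneg sum_nonneg integral_nonneg_AE)
  qed
  also have "\<dots> = sqrt (sqrt C0) / real N powr (3/2) * S"
    by (simp add: powr_three_halves)
  finally show ?thesis
    by (simp add: S_def P_def)
qed

theorem lemma3p1:
  fixes \<beta> h :: real
  assumes "\<beta> > 0"
    and "\<exists>q C0. \<forall>N::nat. N \<ge> 1 \<longrightarrow>
           (\<integral>g. gavg2 \<beta> h N g (\<lambda>\<sigma>1 \<sigma>2. (overlap N \<sigma>1 \<sigma>2 - q) ^ 4) \<partial>disorder N)
             \<le> C0 / (real N) ^ 2"
  shows "\<exists>C. \<forall>N::nat. \<forall>(v :: nat \<Rightarrow> (nat \<times> nat \<Rightarrow> real) \<Rightarrow> (nat \<Rightarrow> real) \<Rightarrow> real)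
                         (w :: nat \<Rightarrow> (nat \<times> nat \<Rightarrow> real) \<Rightarrow> (nat \<Rightarrow> real) \<Rightarrow> real).
     N \<ge> 1
     \<longrightarrow> (\<forall>k<N. \<forall>\<sigma>\<in>spins N. (\<lambda>g. v k g \<sigma>) \<in> borel_measurable (disorder N)
                          \<and> (\<lambda>g. w k g \<sigma>) \<in> borel_measurable (disorder N))
     \<longrightarrow> (\<forall>k<N. integrable (disorder N)
            (\<lambda>g. gavg \<beta> h N g (\<lambda>\<sigma>. (v k g \<sigma>)\<^sup>2) * gavg \<beta> h N g (\<lambda>\<sigma>. (w k g \<sigma>)\<^sup>2)))
     \<longrightarrow> (\<integral>g. (1 / (real N)\<^sup>2) *
             (\<Sum>j<N. \<Sum>k<N. gavg \<beta> h N g (\<lambda>\<sigma>. sdot \<beta> h N g j \<sigma> * v k g \<sigma>)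
                           * gavg \<beta> h N g (\<lambda>\<sigma>. w k g \<sigma> * \<sigma> j)) \<partial>disorder N)
         \<le> C / (real N) powr (3/2) *
            (\<Sum>k<N. sqrt (\<integral>g. gavg \<beta> h N g (\<lambda>\<sigma>. (v k g \<sigma>)\<^sup>2)
                               * gavg \<beta> h N g (\<lambda>\<sigma>. (w k g \<sigma>)\<^sup>2) \<partial>disorder N))"
proof -
  obtain q C0 where "\<forall>N::nat. N \<ge> 1 \<longrightarrow>
      (\<integral>g. gavg2 \<beta> h N g (\<lambda>\<sigma>1 \<sigma>2. (overlap N \<sigma>1 \<sigma>2 - q) ^ 4) \<partial>disorder N) \<le> C0 / (real N) ^ 2"
    using assms(2) by blast
  then show ?thesis
    by (intro exI[of _ "sqrt (sqrt C0)"] allI impI integral_gibbs_cross_sum_le) auto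
qed

end
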